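(* (I) The positive cone $C_+^\dagger$ is equal to $\widehat{\mathbf{n}}_{\Lambda,+}(D^\dagger)$, the dual cone of $\mathbf{n}_{\Lambda,+}$ in $D^\dagger$. (II) The non-negative divisors in the first quadrant of $D^\dagger$ are given by $$C_+^\dagger\cap D_+^\dagger=\{\varrho\in D_+^\dagger:\langle\varrho,n^{\delta'}_{\mathfrak{s}}\rangle\ge0\text{ for all }\mathfrak{s}\in\Lambda^{(n-1)},\ \delta'\in\Lambda^{(0)}\setminus\mathfrak{s}\text{ with }\mathfrak{s}^\perp_{\delta'}\setminus\mathfrak{s}\ne\emptyset\},$$ $$\mathrm{Int}(C_+^\dagger)\cap\mathrm{Int}(D_+^\dagger)=\{\varrho\in \mathrm{Int}(D_+^\dagger):\langle\varrho,n^{\delta'}_{\mathfrak{s}}\rangle>0\text{ for all }\mathfrak{s}\in\Lambda^{(n-1)},\ \delta'\in\Lambda^{(0)}\setminus\mathfrak{s}\text{ with }\mathfrak{s}^\perp_{\delta'}\setminus\mathfrak{s}\ne\emptyset\},$$ and these satisfy $\iota^*(C_+^\dagger\cap D_+^\dagger)=\mathbf{n}^\dagger_{\Lambda,+}$ and $\iota^*(\mathrm{Int}(C_+^\dagger)\cap\mathrm{Int}(D_+^\dagger))=\mathrm{Int}(\mathbf{n}^\dagger_{\Lambda,+})$.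
   Context: $L$ is a lattice of rank $n$ with dual $L^*$; $(\Delta,L)$ is a reflexive polytope in $L_{\mathbb{R}}$ and $\Lambda$ a simplicial decomposition of $\partial\Delta$ with vertex set $\Lambda^{(0)}=L\cap(\partial\Delta\setminus\bigcup\{\mathrm{Int}(F):F\text{ facet of }\Delta\})$, $L$ generated by $\Lambda^{(0)}$; $\Lambda^{(n-1)}$ is the set of $(n-1)$-simplices, and "$\delta\in\mathfrak{s}$" means $\delta$ is a vertex of $\mathfrak{s}$. $D_\Delta=\bigoplus_{\delta\in\Lambda^{(0)}}\mathbb{Z}e^\delta$, $\beta:D_\Delta\to L$, $e^\delta\mapsto\delta$, $\mathbf{n}_\Delta=\ker\beta$, $\iota:\mathbf{n}_\Delta\hookrightarrow D_\Delta$ the inclusion; $D^\dagger=D_\Delta^\dagger\otimes\mathbb{Q}$ with basis $e^{\delta\dagger}$ dual to $e^\delta$, $\iota^*:D^\dagger\to\mathbf{n}_\Delta^\dagger\otimes\mathbb{Q}$ the restriction, $\beta^*:L^*_{\mathbb{Q}}\to D^\dagger$ the dual of $\beta$. $D_+^\dagger=\{\varrho\in D^\dagger:\langle\varrho,e^\delta\rangle\ge0\ \forall\delta\}$, with interior given by strict inequalities. For $\delta\in\Lambda^{(0)}$, $\mathfrak{s}^\perp_\delta$ is the unique simplex of $\Lambda$ whose relative interior contains $-\delta$. For $\mathfrak{s}\in\Lambda^{(n-1)}$ and $\delta'\in\Lambda^{(0)}\setminus\mathfrak{s}$ define $n^{\delta'}_{\mathfrak{s}}=e^{\delta'}+\sum_{\delta\in\mathfrak{s}}n^{\delta'}_{\delta,\mathfrak{s}}e^\delta\in\mathbf{n}_\Delta\otimes\mathbb{Q}$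 where the rationals $n^{\delta'}_{\delta,\mathfrak{s}}$ are determined by $\delta'+\sum_{\delta\in\mathfrak{s}}n^{\delta'}_{\delta,\mathfrak{s}}\delta=0$ in $L_{\mathbb{Q}}$. Let $\mathbf{n}_{\Lambda,+}=\sum_{\mathfrak{s},\delta'}\mathbb{Q}_{\ge0}n^{\delta'}_{\mathfrak{s}}\subseteq\mathbf{n}_\Delta\otimes\mathbb{Q}$, $\mathbf{n}^\dagger_{\Lambda,+}$ its dual cone in $\mathbf{n}_\Delta^\dagger\otimes\mathbb{Q}$, and $\widehat{\mathbf{n}}_{\Lambda,+}(D^\dagger)=\{\varrho\in D^\dagger:\langle\varrho,n\rangle\ge0\ \forall n\in\mathbf{n}_{\Lambda,+}\}$. For $\varrho\in D^\dagger$ and $\mathfrak{s}\in\Lambda^{(n-1)}$, let $\varrho'_{\mathfrak{s}}$ be the unique element of $\beta^*(L^*_{\mathbb{Q}})$ with $\langle\varrho'_{\mathfrak{s}},e^\delta\rangle=\langle\varrho,e^\delta\rangle$ for all $\delta\in\mathfrak{s}$, and $\varrho_{\mathfrak{s}}=\varrho-\varrho'_{\mathfrak{s}}$. The positive cone is $C_+^\dagger=\{\varrho\in D^\dagger:\langle\varrho_{\mathfrak{s}},e^{\delta'}\rangle\ge0\text{ for all }\mathfrak{s}\in\Lambda^{(n-1)},\ \delta'\in\Lambda^{(0)}\setminus\mathfrak{s}\}$. *)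

theory Defs
  imports "HOL-Analysis.Analysis"
begin

text \<open>The lattice L of rank n is identified with the integer points of real^'n
  (n = CARD('n)); L^* is identified with the integer points of the dual via the
  standard inner product.\<close>

definition lattice_pts :: "(real ^ 'n::finite) set" where
  "lattice_pts = {x. \<forall>i. x $ i \<in> \<int>}"

definition lattice_polytope :: "(real ^ 'n::finite) set \<Rightarrow> bool" where
  "lattice_polytope P \<longleftrightarrow> (\<exists>S. finite S \<and> S \<subseteq> lattice_pts \<and> P = convex hull S)"

definition polar_dual :: "(real ^ 'n::finite) set \<Rightarrow> (real ^ 'n) set" where
  "polar_dual P = {y. \<forall>x\<in>P. x \<bullet> y \<ge> -1}"

definition reflexive_polytope :: "(real ^ 'n::finite) set \<Rightarrow> bool" where
  "reflexive_polytope P \<longleftrightarrow> lattice_polytope P \<and> 0 \<in> interior P \<and> lattice_polytope (polar_dual P)"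

definition admissible_pts :: "(real ^ 'n::finite) set \<Rightarrow> (real ^ 'n) set" where
  "admissible_pts P = lattice_pts \<inter> (frontier P - \<Union>{rel_interior F | F. F facet_of P})"

text \<open>A simplicial decomposition (triangulation) of a set S, simplices given by their vertex sets.\<close>
definition simplicial_decomp :: "(real ^ 'n::finite) set set \<Rightarrow> (real ^ 'n) set \<Rightarrow> bool" where
  "simplicial_decomp \<Lambda> S \<longleftrightarrow>
     finite \<Lambda> \<and>
     (\<forall>s\<in>\<Lambda>. s \<noteq> {} \<and> finite s \<and> \<not> affine_dependent s) \<and>
     (\<forall>s\<in>\<Lambda>. \<forall>t. t \<noteq> {} \<longrightarrow> t \<subseteq> s \<longrightarrow> t \<in> \<Lambda>) \<and>
     (\<forall>s\<in>\<Lambda>. \<forall>t\<in>\<Lambda>. convex hull s \<inter> convex hull t = convex hull (s \<inter> t)) \<and>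
     \<Union>((\<lambda>s. convex hull s) ` \<Lambda>) = S"

definition verts :: "(real ^ 'n::finite) set set \<Rightarrow> (real ^ 'n) set" where
  "verts \<Lambda> = \<Union>\<Lambda>"

definition top_simplices :: "(real ^ 'n::finite) set set \<Rightarrow> (real ^ 'n) set set" where
  "top_simplices \<Lambda> = {s\<in>\<Lambda>. card s = CARD('n)}"

definition lattice_generated_by :: "(real ^ 'n::finite) set \<Rightarrow> bool" where
  "lattice_generated_by V \<longleftrightarrow>
     (\<forall>x\<in>lattice_pts. \<exists>c :: real ^ 'n \<Rightarrow> int. x = (\<Sum>v\<in>V. of_int (c v) *\<^sub>R v))"

definition sperp :: "(real ^ 'n::finite) set set \<Rightarrow> real ^ 'n \<Rightarrow> (real ^ 'n) set" where
  "sperp \<Lambda> d = (THE s. s \<in> \<Lambda> \<and>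
      (\<exists>c :: real ^ 'n \<Rightarrow> real. (\<forall>v\<in>s. c v > 0) \<and> - d = (\<Sum>v\<in>s. c v *\<^sub>R v)))"

text \<open>Elements of D_Delta (x) Q and of D^dagger are rational functions on Lambda^(0),
  extended by zero outside.\<close>
definition Ddag :: "(real ^ 'n::finite) set \<Rightarrow> (real ^ 'n \<Rightarrow> rat) set" where
  "Ddag V = {r. \<forall>x. x \<notin> V \<longrightarrow> r x = 0}"

definition dpair :: "(real ^ 'n::finite) set \<Rightarrow> (real ^ 'n \<Rightarrow> rat) \<Rightarrow> (real ^ 'n \<Rightarrow> rat) \<Rightarrow> rat" where
  "dpair V r m = (\<Sum>v\<in>V. r v * m v)"

definition Dplus :: "(real ^ 'n::finite) set \<Rightarrow> (real ^ 'n \<Rightarrow> rat) set" where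
  "Dplus V = {r\<in>Ddag V. \<forall>v\<in>V. r v \<ge> 0}"

definition Dplus_int :: "(real ^ 'n::finite) set \<Rightarrow> (real ^ 'n \<Rightarrow> rat) set" where
  "Dplus_int V = {r\<in>Ddag V. \<forall>v\<in>V. r v > 0}"

text \<open>Topological interior inside the rational vector space D^dagger (sup-norm balls).\<close>
definition Dinterior :: "(real ^ 'n::finite) set \<Rightarrow> (real ^ 'n \<Rightarrow> rat) set \<Rightarrow> (real ^ 'n \<Rightarrow> rat) set" where
  "Dinterior V S = {r\<in>S. \<exists>e>0. \<forall>r'\<in>Ddag V. (\<forall>v\<in>V. \<bar>r' v - r v\<bar> < e) \<longrightarrow> r' \<in> S}"

text \<open>n_Delta (x) Q = ker beta (x) Q.\<close>
definition Nsp :: "(real ^ 'n::finite) set \<Rightarrow> (real ^ 'n \<Rightarrow> rat) set" where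
  "Nsp V = {m\<in>Ddag V. (\<Sum>v\<in>V. real_of_rat (m v) *\<^sub>R v) = 0}"

text \<open>n^{delta'}_s = e^{delta'} + sum_{delta in s} n^{delta'}_{delta,s} e^delta.\<close>
definition nvec :: "(real ^ 'n::finite) set \<Rightarrow> real ^ 'n \<Rightarrow> (real ^ 'n \<Rightarrow> rat)" where
  "nvec s d = (THE c. c d = 1 \<and> (\<forall>v. v \<notin> insert d s \<longrightarrow> c v = 0) \<and>
                      (\<Sum>v\<in>insert d s. real_of_rat (c v) *\<^sub>R v) = 0)"

definition gen_pairs :: "(real ^ 'n::finite) set set \<Rightarrow> ((real ^ 'n) set \<times> (real ^ 'n)) set" where
  "gen_pairs \<Lambda> = {(s, d). s \<in> top_simplices \<Lambda> \<and> d \<in> verts \<Lambda> - s}"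

definition ncone :: "(real ^ 'n::finite) set set \<Rightarrow> (real ^ 'n \<Rightarrow> rat) set" where
  "ncone \<Lambda> = {m. \<exists>a :: (real ^ 'n) set \<times> (real ^ 'n) \<Rightarrow> rat. (\<forall>p. a p \<ge> 0) \<and>
        m = (\<lambda>x. \<Sum>p\<in>gen_pairs \<Lambda>. a p * nvec (fst p) (snd p) x)}"

definition nhat :: "(real ^ 'n::finite) set set \<Rightarrow> (real ^ 'n \<Rightarrow> rat) set" where
  "nhat \<Lambda> = {r\<in>Ddag (verts \<Lambda>). \<forall>m\<in>ncone \<Lambda>. dpair (verts \<Lambda>) r m \<ge> 0}"

definition betastar :: "(real ^ 'n::finite) set \<Rightarrow> (real ^ 'n \<Rightarrow> rat) set" where
  "betastar V = {r\<in>Ddag V. \<exists>u :: 'n \<Rightarrow> rat.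
       \<forall>v\<in>V. real_of_rat (r v) = (\<Sum>i\<in>UNIV. real_of_rat (u i) * v $ i)}"

definition rho_prime :: "(real ^ 'n::finite) set set \<Rightarrow> (real ^ 'n \<Rightarrow> rat) \<Rightarrow> (real ^ 'n) set \<Rightarrow> (real ^ 'n \<Rightarrow> rat)" where
  "rho_prime \<Lambda> r s = (THE r'. r' \<in> betastar (verts \<Lambda>) \<and> (\<forall>d\<in>s. r' d = r d))"

definition Cplus :: "(real ^ 'n::finite) set set \<Rightarrow> (real ^ 'n \<Rightarrow> rat) set" where
  "Cplus \<Lambda> = {r\<in>Ddag (verts \<Lambda>). \<forall>s\<in>top_simplices \<Lambda>. \<forall>d\<in>verts \<Lambda> - s.
       r d - rho_prime \<Lambda> r s d \<ge> 0}"

text \<open>n_Delta^dagger (x) Q = Hom_Q(n_Delta (x) Q, Q): Q-linear functionals on Nsp V,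
  extended by zero outside Nsp V.\<close>
definition Ndag :: "(real ^ 'n::finite) set \<Rightarrow> ((real ^ 'n \<Rightarrow> rat) \<Rightarrow> rat) set" where
  "Ndag V = {f. (\<forall>m. m \<notin> Nsp V \<longrightarrow> f m = 0) \<and>
     (\<forall>a b m m'. m \<in> Nsp V \<longrightarrow> m' \<in> Nsp V \<longrightarrow>
        f (\<lambda>x. a * m x + b * m' x) = a * f m + b * f m')}"

text \<open>iota^*: restriction of a functional on D_Delta (x) Q to n_Delta (x) Q.\<close>
definition iota_star :: "(real ^ 'n::finite) set \<Rightarrow> (real ^ 'n \<Rightarrow> rat) \<Rightarrow> ((real ^ 'n \<Rightarrow> rat) \<Rightarrow> rat)" where
  "iota_star V r = (\<lambda>m. if m \<in> Nsp V then dpair V r m else 0)"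

definition ndag_cone :: "(real ^ 'n::finite) set set \<Rightarrow> ((real ^ 'n \<Rightarrow> rat) \<Rightarrow> rat) set" where
  "ndag_cone \<Lambda> = {f\<in>Ndag (verts \<Lambda>). \<forall>m\<in>ncone \<Lambda>. f m \<ge> 0}"

text \<open>Topological interior inside the finite-dimensional rational space n_Delta^dagger (x) Q
  (balls for the operator norm w.r.t. the l1-norm on n_Delta (x) Q).\<close>
definition Ninterior :: "(real ^ 'n::finite) set \<Rightarrow> ((real ^ 'n \<Rightarrow> rat) \<Rightarrow> rat) set \<Rightarrow> ((real ^ 'n \<Rightarrow> rat) \<Rightarrow> rat) set" where
  "Ninterior V S = {f\<in>S. \<exists>e>0. \<forall>g\<in>Ndag V.
      (\<forall>m\<in>Nsp V. \<bar>g m - f m\<bar> \<le> e * (\<Sum>v\<in>V. \<bar>m v\<bar>)) \<longrightarrow> g \<in> S}"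

end

theory Submission
  imports Defs
begin

text \<open>
  For a top simplex \<open>s\<close>, \<open>\<rho>'\<^sub>s\<close> lies in \<open>\<beta>\<^sup>*(L\<^sup>*\<^sub>\<rat>)\<close> and so annihilates
  \<open>n\<^sub>\<Delta>\<close>, while \<open>n\<^sup>\<delta>'\<^sub>s\<close> is supported on \<open>s \<union> {\<delta>'}\<close> with coefficient 1 at
  \<open>\<delta>'\<close>. Hence \<open>\<langle>\<rho>, n\<^sup>\<delta>'\<^sub>s\<rangle> = \<langle>\<rho>\<^sub>s, e\<^sup>\<delta>'\<rangle>\<close>, which is (I).

  The coefficients of \<open>n\<^sup>\<delta>'\<^sub>s\<close> on \<open>s\<close> express \<open>-\<delta>'\<close> in the basis \<open>s\<close>; if
  \<open>s\<^sup>\<perp>\<^sub>\<delta>' \<subseteq> s\<close> they are the positive coefficients defining \<open>s\<^sup>\<perp>\<^sub>\<delta>'\<close>, so for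
  \<open>\<rho> \<ge> 0\<close> the corresponding inequality holds automatically. With finitely many
  generators, the interior of \<open>C\<^sub>+\<^sup>\<dagger>\<close> is cut out by the strict inequalities.

  For the images under \<open>\<iota>\<^sup>*\<close> fix a top simplex \<open>s\<^sub>0\<close>: the \<open>n\<^sup>v\<^sub>s\<^sub>0\<close> with
  \<open>v \<notin> s\<^sub>0\<close> form a basis of \<open>n\<^sub>\<Delta>\<close>, so a functional \<open>f\<close> on \<open>n\<^sub>\<Delta>\<close> lifts to
  any \<open>\<rho>\<close> with prescribed values on \<open>s\<^sub>0\<close> and \<open>\<langle>\<rho>, n\<^sup>v\<^sub>s\<^sub>0\<rangle> = f(n\<^sup>v\<^sub>s\<^sub>0)\<close>.
  Prescribing \<open>0\<close>, resp. a small \<open>\<epsilon> > 0\<close>, on \<open>s\<^sub>0\<close> yields \<open>\<rho> \<ge> 0\<close>, resp.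
  \<open>\<rho> > 0\<close>, when \<open>f\<close> lies in \<open>n\<^sup>\<dagger>\<^sub>\<Lambda>\<^sub>+\<close>, resp. its interior.

  Geometrically, everything rests on the simplices of \<open>\<Lambda>\<close> being linearly independent,
  so that the top ones are bases of \<open>L\<^sub>\<rat>\<close>; this holds because rays from
  \<open>0 \<in> Int \<Delta>\<close> meet \<open>\<partial>\<Delta>\<close> only once.
\<close>

section \<open>Rational linear algebra and convex bodies\<close>

lemma det_in_Rats:
  fixes A :: "real^'n^'n"
  assumes "\<And>i j. A$i$j \<in> \<rat>"
  shows "det A \<in> \<rat>"
  unfolding det_def using assms by (intro Rats_sum Rats_mult Rats_prod) auto

lemma of_rat_inv_of_rat: "x \<in> \<rat> \<Longrightarrow> of_rat (inv of_rat x) = (x::real)"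
  by (simp add: Rats_def f_inv_into_f)

lemma cramer_Rats:
  fixes A :: "real^'n^'n"
  assumes "det A \<noteq> 0" and "\<And>i j. A$i$j \<in> \<rat>" and "\<And>i. b$i \<in> \<rat>"
  obtains q :: "'n \<Rightarrow> rat" where "A *v (\<chi> k. of_rat (q k)) = b"
proof -
  define x where "x = (\<chi> k. det (\<chi> i j. if j = k then b$i else A$i$j) / det A)"
  have "A *v x = b"
    using cramer[OF assms(1)] unfolding x_def by blast
  moreover have "x$k \<in> \<rat>" for k
    unfolding x_def using assms by (auto intro!: Rats_divide det_in_Rats)
  hence "(\<chi> k. of_rat (inv of_rat (x$k))) = x"
    by (simp add: vec_eq_iff of_rat_inv_of_rat)
  ultimately show ?thesis
    using that by metis
qed

lemma matrix_columns_mult_vector: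
  assumes "bij_betw g UNIV s"
  shows "(\<chi> i j. g j $ i :: real^'n^'n) *v x = (\<Sum>v\<in>s. x $ inv_into UNIV g v *\<^sub>R v)"
proof -
  have "(\<chi> i j. g j $ i :: real^'n^'n) *v x = (\<Sum>j\<in>UNIV. x$j *\<^sub>R g j)"
    by (simp add: matrix_vector_mult_def vec_eq_iff mult.commute)
  also have "\<dots> = (\<Sum>v\<in>s. x $ inv_into UNIV g v *\<^sub>R v)"
    using sum.reindex_bij_betw[OF assms, of "\<lambda>v. x $ inv_into UNIV g v *\<^sub>R v"] assms
    by (simp add: bij_betw_inv_into_left)
  finally show ?thesis .
qed

lemma basis_matrix_det_nonzero:
  fixes s :: "(real^'n) set"
  assumes ind: "independent s" and card: "card s = CARD('n)"
  obtains g where "bij_betw g UNIV s" and "det (\<chi> i j. g j $ i :: real^'n^'n) \<noteq> 0"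
proof -
  have fin: "finite s"
    using card card.infinite by force
  obtain g where g: "bij_betw g (UNIV::'n set) s"
    using finite_same_card_bij[of "UNIV::'n set" s] fin card by auto
  let ?A = "\<chi> i j. g j $ i :: real^'n^'n"
  have "x = 0" if "?A *v x = 0" for x
  proof -
    have sum0: "(\<Sum>v\<in>s. x $ inv_into UNIV g v *\<^sub>R v) = 0"
      using that by (simp add: matrix_columns_mult_vector[OF g])
    have "x $ inv_into UNIV g v = 0" if "v \<in> s" for v
      using independentD[OF ind fin subset_refl sum0 that] by simp
    hence "x$j = 0" for j
      using g by (metis UNIV_I bij_betw_apply bij_betw_inv_into_left)
    thus ?thesis by (simp add: vec_eq_iff)
  qed
  hence "det ?A \<noteq> 0"
    using det_nz_iff_inj[of "(*v) ?A"] linear_injective_0[of "(*v) ?A"] by simp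
  with g that show ?thesis by blast
qed

lemma rational_coordinates:
  fixes s :: "(real^'n) set"
  assumes "independent s" and "card s = CARD('n)"
    and "\<And>v i. v \<in> s \<Longrightarrow> v$i \<in> \<rat>" and "\<And>i. b$i \<in> \<rat>"
  obtains c :: "real^'n \<Rightarrow> rat" where "(\<Sum>v\<in>s. of_rat (c v) *\<^sub>R v) = b"
proof -
  obtain g where g: "bij_betw g UNIV s" and det: "det (\<chi> i j. g j $ i :: real^'n^'n) \<noteq> 0"
    using basis_matrix_det_nonzero assms(1,2) by blast
  have "(\<chi> i j. g j $ i :: real^'n^'n) $ i $ j \<in> \<rat>" for i j
    using assms(3) g by (simp add: bij_betwE)
  then obtain q where "(\<chi> i j. g j $ i :: real^'n^'n) *v (\<chi> k. of_rat (q k)) = b"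
    using cramer_Rats[OF det _ assms(4)] by blast
  hence "(\<Sum>v\<in>s. of_rat (q (inv_into UNIV g v)) *\<^sub>R v) = b"
    by (simp add: matrix_columns_mult_vector[OF g])
  thus ?thesis by (rule that)
qed

lemma rational_linear_functional:
  fixes s :: "(real^'n) set" and f :: "real^'n \<Rightarrow> rat"
  assumes "independent s" and "card s = CARD('n)" and "\<And>v i. v \<in> s \<Longrightarrow> v$i \<in> \<rat>"
  obtains u :: "'n \<Rightarrow> rat" where "\<And>v. v \<in> s \<Longrightarrow> of_rat (f v) = (\<Sum>i\<in>UNIV. of_rat (u i) * v$i)"
proof -
  obtain g where g: "bij_betw g UNIV s" and det: "det (\<chi> i j. g j $ i :: real^'n^'n) \<noteq> 0"
    using basis_matrix_det_nonzero assms(1,2) by blast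
  let ?A = "transpose (\<chi> i j. g j $ i :: real^'n^'n)"
  have "?A $ i $ j \<in> \<rat>" for i j
    using assms(3) g by (simp add: transpose_def bij_betwE)
  moreover have "det ?A \<noteq> 0"
    using det by simp
  ultimately obtain u where u: "?A *v (\<chi> k. of_rat (u k)) = (\<chi> j. of_rat (f (g j)))"
    using cramer_Rats[of ?A "\<chi> j. of_rat (f (g j))"] by auto
  have "of_rat (f v) = (\<Sum>i\<in>UNIV. of_rat (u i) * v$i)" if v: "v \<in> s" for v
  proof -
    obtain j where j: "v = g j"
      using g v unfolding bij_betw_def by blast
    have "of_rat (f v) = (?A *v (\<chi> k. of_rat (u k))) $ j"
      unfolding u j by simp
    also have "\<dots> = (\<Sum>i\<in>UNIV. of_rat (u i) * v$i)"
      by (simp add: matrix_vector_mult_def transpose_def j mult.commute)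
    finally show ?thesis .
  qed
  thus ?thesis by (rule that)
qed

lemma independent_coeffs_unique:
  fixes s :: "'a::real_vector set"
  assumes "independent s" "finite s" "(\<Sum>v\<in>s. a v *\<^sub>R v) = (\<Sum>v\<in>s. b v *\<^sub>R v)" "v \<in> s"
  shows "a v = b v"
proof -
  have "(\<Sum>v\<in>s. (a v - b v) *\<^sub>R v) = 0"
    using assms(3) by (simp add: scaleR_diff_left sum_subtractf)
  from independentD[OF assms(1,2) subset_refl this assms(4)] show ?thesis
    by simp
qed

lemma affine_coeffs_unique:
  fixes s :: "'a::real_vector set"
  assumes "finite s" "\<not> affine_dependent s"
    and "sum a s = sum b s" "(\<Sum>v\<in>s. a v *\<^sub>R v) = (\<Sum>v\<in>s. b v *\<^sub>R v)" "v \<in> s"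
  shows "a v = b v"
proof (rule ccontr)
  assume "a v \<noteq> b v"
  hence "sum (\<lambda>v. a v - b v) s = 0 \<and> (\<exists>v\<in>s. a v - b v \<noteq> 0) \<and> (\<Sum>v\<in>s. (a v - b v) *\<^sub>R v) = 0"
    using assms by (auto simp: sum_subtractf scaleR_diff_left)
  thus False
    using assms(2) affine_dependent_explicit_finite[OF assms(1)] by blast
qed

lemma frontier_ray_unique:
  fixes S :: "'a::euclidean_space set"
  assumes "convex S" "0 \<in> interior S" "0 < a" "0 < b"
    and "a *\<^sub>R x \<in> frontier S" "b *\<^sub>R x \<in> frontier S"
  shows "a = b"
proof -
  have False if "0 < a" "a < b" "a *\<^sub>R x \<in> frontier S" "b *\<^sub>R x \<in> frontier S" for a b
  proof -
    have "b *\<^sub>R x - (1 - a / b) *\<^sub>R (b *\<^sub>R x - 0) \<in> interior S"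
      using that by (intro mem_interior_closure_convex_shrink[OF assms(1,2)]) (auto simp: frontier_def)
    moreover have "b *\<^sub>R x - (1 - a / b) *\<^sub>R (b *\<^sub>R x - 0) = a *\<^sub>R x"
      using that by (simp add: algebra_simps)
    ultimately show False
      using that(3) by (simp add: frontier_def)
  qed
  thus ?thesis
    using assms(3-6) by (metis linorder_neqE_linordered_idom)
qed

definition in_open_cone :: "'a::real_vector \<Rightarrow> 'a set \<Rightarrow> bool" where
  "in_open_cone x s \<longleftrightarrow> (\<exists>c. (\<forall>v\<in>s. 0 < c v) \<and> x = (\<Sum>v\<in>s. c v *\<^sub>R v))"

lemma in_open_cone_normalize:
  assumes "finite s" "s \<noteq> {}" "in_open_cone x s"
  obtains T u where "0 < T" "\<forall>v\<in>s. 0 < u v" "sum u s = 1" "(\<Sum>v\<in>s. u v *\<^sub>R v) = (1 / T) *\<^sub>R x"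
proof -
  obtain c where c: "\<forall>v\<in>s. 0 < c v" "x = (\<Sum>v\<in>s. c v *\<^sub>R v)"
    using assms(3) unfolding in_open_cone_def by blast
  define T where "T = sum c s"
  have T: "0 < T"
    unfolding T_def using c(1) assms(1,2) by (intro sum_pos) auto
  have "\<forall>v\<in>s. 0 < c v / T" "sum (\<lambda>v. c v / T) s = 1"
    using c(1) T by (auto simp: T_def sum_divide_distrib[symmetric])
  moreover have "(\<Sum>v\<in>s. (c v / T) *\<^sub>R v) = (1 / T) *\<^sub>R x"
    unfolding c(2) scaleR_sum_right by (intro sum.cong) auto
  ultimately show ?thesis
    by (rule that[OF T])
qed

lemma finite_uniform_margin:
  fixes h w :: "'a \<Rightarrow> 'b::linordered_field"
  assumes "finite P" "\<forall>p\<in>P. 0 < h p" "\<forall>p\<in>P. 0 < w p"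
  obtains e where "0 < e" "\<forall>p\<in>P. e * w p \<le> h p"
proof -
  define e where "e = Min (insert 1 ((\<lambda>p. h p / w p) ` P))"
  have "0 < e"
    unfolding e_def using assms by (subst Min_gr_iff) auto
  moreover have "e * w p \<le> h p" if "p \<in> P" for p
  proof -
    have "e \<le> h p / w p"
      unfolding e_def using assms(1) that by (intro Min_le) auto
    thus ?thesis
      using assms(3) that by (simp add: pos_le_divide_eq)
  qed
  ultimately show ?thesis
    using that by blast
qed


section \<open>The pairing, \<open>n\<^sub>\<Delta>\<close> and its dual\<close>

lemma dpair_sum:
  assumes "finite P"
  shows "dpair V r (\<lambda>x. \<Sum>p\<in>P. a p * M p x) = (\<Sum>p\<in>P. a p * dpair V r (M p))"
proof -
  have "dpair V r (\<lambda>x. \<Sum>p\<in>P. a p * M p x) = (\<Sum>v\<in>V. \<Sum>p\<in>P. a p * (r v * M p v))"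
    unfolding dpair_def by (simp add: sum_distrib_left algebra_simps)
  also have "\<dots> = (\<Sum>p\<in>P. a p * dpair V r (M p))"
    unfolding dpair_def sum_distrib_left by (rule sum.swap)
  finally show ?thesis .
qed

lemma dpair_diff_left: "dpair V (\<lambda>v. r v - q v) m = dpair V r m - dpair V q m"
  unfolding dpair_def by (simp add: sum_subtractf algebra_simps)

lemma dpair_point_mass:
  assumes "finite V" "d \<in> V"
  shows "dpair V (\<lambda>v. if v = d then c else 0) m = c * m d"
proof -
  have "dpair V (\<lambda>v. if v = d then c else 0) m = (\<Sum>v\<in>V. if v = d then c * m d else 0)"
    unfolding dpair_def by (intro sum.cong) auto
  thus ?thesis
    using assms by simp
qed

lemma dpair_lower_bound:
  assumes "\<forall>v\<in>V. \<bar>r' v - r v\<bar> \<le> e"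
  shows "dpair V r m - e * (\<Sum>v\<in>V. \<bar>m v\<bar>) \<le> dpair V r' m"
proof -
  have "(r v - r' v) * m v \<le> e * \<bar>m v\<bar>" if "v \<in> V" for v
  proof -
    have "(r v - r' v) * m v \<le> \<bar>r' v - r v\<bar> * \<bar>m v\<bar>"
      by (metis abs_ge_self abs_minus_commute abs_mult)
    also have "\<dots> \<le> e * \<bar>m v\<bar>"
      using assms that by (intro mult_right_mono) auto
    finally show ?thesis .
  qed
  hence "dpair V (\<lambda>v. r v - r' v) m \<le> e * (\<Sum>v\<in>V. \<bar>m v\<bar>)"
    unfolding dpair_def sum_distrib_left by (rule sum_mono)
  thus ?thesis
    by (simp add: dpair_diff_left)
qed

lemma Nsp_sum:
  assumes "finite P" "\<forall>p\<in>P. M p \<in> Nsp V"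
  shows "(\<lambda>x. \<Sum>p\<in>P. a p * M p x) \<in> Nsp V"
proof -
  have "(\<Sum>v\<in>V. of_rat (\<Sum>p\<in>P. a p * M p v) *\<^sub>R v)
      = (\<Sum>v\<in>V. \<Sum>p\<in>P. of_rat (a p) *\<^sub>R (of_rat (M p v) *\<^sub>R v))"
    by (simp add: of_rat_sum of_rat_mult scaleR_sum_left)
  also have "\<dots> = (\<Sum>p\<in>P. of_rat (a p) *\<^sub>R (\<Sum>v\<in>V. of_rat (M p v) *\<^sub>R v))"
    unfolding scaleR_sum_right by (rule sum.swap)
  also have "\<dots> = 0"
    using assms(2) unfolding Nsp_def by simp
  finally show ?thesis
    using assms(2) unfolding Nsp_def Ddag_def by auto
qed

lemma Nsp_linear_combination:
  assumes "m \<in> Nsp V" "m' \<in> Nsp V"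
  shows "(\<lambda>x. a * m x + b * m' x) \<in> Nsp V"
  using Nsp_sum[of "{True, False}" "\<lambda>p. if p then m else m'" V "\<lambda>p. if p then a else b"] assms
  by simp

lemma Ndag_linear:
  assumes "f \<in> Ndag V" "m \<in> Nsp V" "m' \<in> Nsp V"
  shows "f (\<lambda>x. a * m x + b * m' x) = a * f m + b * f m'"
  using assms unfolding Ndag_def by blast

lemma Ndag_sum:
  assumes f: "f \<in> Ndag V" and "finite P" and "\<forall>p\<in>P. M p \<in> Nsp V"
  shows "f (\<lambda>x. \<Sum>p\<in>P. a p * M p x) = (\<Sum>p\<in>P. a p * f (M p))"
  using assms(2,3)
proof (induction P rule: finite_induct)
  case empty
  have "(\<lambda>x. 0) \<in> Nsp V"
    unfolding Nsp_def Ddag_def by simp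
  from Ndag_linear[OF f this this, of 0 0] show ?case
    by simp
next
  case (insert q P)
  have "(\<lambda>x. \<Sum>p\<in>P. a p * M p x) \<in> Nsp V"
    using insert by (intro Nsp_sum) auto
  from Ndag_linear[OF f _ this, of "M q" "a q" 1] show ?case
    using insert by simp
qed

lemma iota_star_Ndag: "iota_star V r \<in> Ndag V"
  unfolding Ndag_def iota_star_def
  by (simp add: Nsp_linear_combination dpair_def sum.distrib sum_distrib_left algebra_simps)

lemma betastar_inner:
  assumes "r \<in> betastar V"
  obtains U :: "real^'n::finite" where "\<And>v. v \<in> V \<Longrightarrow> of_rat (r v) = U \<bullet> v"
proof -
  obtain u :: "'n \<Rightarrow> rat" where "\<forall>v\<in>V. of_rat (r v) = (\<Sum>i\<in>UNIV. of_rat (u i) * v $ i)"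
    using assms unfolding betastar_def by blast
  hence "\<And>v. v \<in> V \<Longrightarrow> of_rat (r v) = (\<chi> i. of_rat (u i)) \<bullet> v"
    by (simp add: inner_vec_def)
  thus ?thesis by (rule that)
qed

lemma betastar_dpair_Nsp:
  assumes "finite V" "b \<in> betastar V" "m \<in> Nsp V"
  shows "dpair V b m = 0"
proof -
  obtain U where U: "\<And>v. v \<in> V \<Longrightarrow> of_rat (b v) = U \<bullet> v"
    using betastar_inner[OF assms(2)] by blast
  have "of_rat (dpair V b m) = (\<Sum>v\<in>V. of_rat (m v) * (U \<bullet> v))"
    unfolding dpair_def of_rat_sum of_rat_mult using U by (simp add: mult.commute)
  also have "\<dots> = U \<bullet> (\<Sum>v\<in>V. of_rat (m v) *\<^sub>R v)"
    by (simp add: inner_sum_right)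
  also have "\<dots> = 0"
    using assms(3) unfolding Nsp_def by simp
  finally show ?thesis by simp
qed

lemma Nsp_vanishing_off_independent:
  assumes "finite V" "m \<in> Nsp V" "s \<subseteq> V" "independent s" "\<forall>x. x \<notin> s \<longrightarrow> m x = 0"
  shows "m x = 0"
proof (cases "x \<in> s")
  case True
  have "(\<Sum>v\<in>s. of_rat (m v) *\<^sub>R v) = (\<Sum>v\<in>V. of_rat (m v) *\<^sub>R v)"
    using assms(1,3,5) by (intro sum.mono_neutral_left) auto
  also have "\<dots> = 0"
    using assms(2) unfolding Nsp_def by simp
  finally have "real_of_rat (m x) = 0"
    by (rule independentD[OF assms(4) finite_subset[OF assms(3,1)] subset_refl _ True])
  thus ?thesis by simp
qed (use assms(5) in blast)

section \<open>Triangulations of the boundary of a convex body\<close>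

locale boundary_triangulation =
  fixes \<Delta> :: "(real ^ 'n::finite) set" and \<Lambda> :: "(real ^ 'n) set set"
  assumes convex: "convex \<Delta>" and bounded: "bounded \<Delta>" and zero_interior: "0 \<in> interior \<Delta>"
    and decomp: "simplicial_decomp \<Lambda> (frontier \<Delta>)"
    and verts_Rats: "\<And>v i. v \<in> verts \<Lambda> \<Longrightarrow> v $ i \<in> \<rat>"
begin

abbreviation "V \<equiv> verts \<Lambda>"

lemma finite_Lambda: "finite \<Lambda>"
  and simplex_nonempty: "s \<in> \<Lambda> \<Longrightarrow> s \<noteq> {}"
  and simplex_finite: "s \<in> \<Lambda> \<Longrightarrow> finite s"
  and simplex_affine_independent: "s \<in> \<Lambda> \<Longrightarrow> \<not> affine_dependent s"
  and face_in_Lambda: "s \<in> \<Lambda> \<Longrightarrow> t \<noteq> {} \<Longrightarrow> t \<subseteq> s \<Longrightarrow> t \<in> \<Lambda>"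
  and hull_inter: "s \<in> \<Lambda> \<Longrightarrow> t \<in> \<Lambda> \<Longrightarrow> convex hull s \<inter> convex hull t = convex hull (s \<inter> t)"
  and hulls_cover_frontier: "\<Union>((\<lambda>s. convex hull s) ` \<Lambda>) = frontier \<Delta>"
  using decomp unfolding simplicial_decomp_def by blast+

lemma hull_simplex_subset_frontier: "s \<in> \<Lambda> \<Longrightarrow> convex hull s \<subseteq> frontier \<Delta>"
  using hulls_cover_frontier by blast

lemma simplex_subset_verts: "s \<in> \<Lambda> \<Longrightarrow> s \<subseteq> V"
  unfolding verts_def by blast

lemma finite_verts: "finite V"
  unfolding verts_def by (rule finite_Union[OF finite_Lambda simplex_finite])

lemma verts_nonzero: "v \<in> V \<Longrightarrow> v \<noteq> 0"
proof -
  assume "v \<in> V"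
  then obtain s where s: "s \<in> \<Lambda>" "v \<in> s"
    unfolding verts_def by blast
  hence "v \<in> frontier \<Delta>"
    using hull_simplex_subset_frontier[OF s(1)] hull_inc[OF s(2)] by blast
  thus "v \<noteq> 0"
    using zero_interior by (auto simp: frontier_def)
qed

lemma ray_unique: "0 < a \<Longrightarrow> 0 < b \<Longrightarrow> a *\<^sub>R x \<in> frontier \<Delta> \<Longrightarrow> b *\<^sub>R x \<in> frontier \<Delta> \<Longrightarrow> a = b"
  using frontier_ray_unique[OF convex zero_interior] by blast

text \<open>Otherwise a relative interior point \<open>z\<close> of the simplex could be moved away from
  \<open>0 \<in> aff s\<close> inside the simplex, putting two points of the ray through \<open>z\<close> on \<open>\<partial>\<Delta>\<close>.\<close>
lemma zero_notin_affine_hull_simplex: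
  assumes s: "s \<in> \<Lambda>"
  shows "0 \<notin> affine hull s"
proof
  assume zero: "0 \<in> affine hull s"
  have ne: "convex hull s \<noteq> {}"
    using simplex_nonempty[OF s] by simp
  then obtain z where z: "z \<in> rel_interior (convex hull s)"
    using rel_interior_eq_empty[of "convex hull s"] by auto
  hence "\<forall>x\<in>affine hull s. \<exists>e>1. (1 - e) *\<^sub>R x + e *\<^sub>R z \<in> convex hull s"
    using convex_rel_interior_iff2[of "convex hull s" z] ne by (simp add: affine_hull_convex_hull)
  then obtain e where e: "1 < e" "e *\<^sub>R z \<in> convex hull s"
    using zero by fastforce
  have "z \<in> convex hull s"
    using z rel_interior_subset by blast
  hence "e *\<^sub>R z \<in> frontier \<Delta>" "1 *\<^sub>R z \<in> frontier \<Delta>"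
    using e hull_simplex_subset_frontier[OF s] by auto
  hence "e = 1"
    using ray_unique e(1) by simp
  with e(1) show False by simp
qed

lemma simplex_independent:
  assumes s: "s \<in> \<Lambda>"
  shows "independent s"
proof -
  have "\<not> affine_dependent (insert 0 s)"
    using affine_independent_insert simplex_affine_independent[OF s] zero_notin_affine_hull_simplex[OF s] .
  moreover have "0 \<notin> s"
    using zero_notin_affine_hull_simplex[OF s] by (metis hull_inc)
  ultimately show ?thesis
    using affine_dependent_iff_dependent[of 0 s] by simp
qed

lemma open_cone_simplex_exists:
  assumes "x \<noteq> 0"
  obtains s where "s \<in> \<Lambda>" "in_open_cone x s"
proof -
  obtain t where t: "0 < t" "t *\<^sub>R x \<in> frontier \<Delta>"
    using ray_to_frontier[OF bounded zero_interior assms] by (metis add_0)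
  then obtain s where s: "s \<in> \<Lambda>" "t *\<^sub>R x \<in> convex hull s"
    using hulls_cover_frontier by blast
  obtain w where w: "\<forall>v\<in>s. 0 \<le> w v" "sum w s = 1" "(\<Sum>v\<in>s. w v *\<^sub>R v) = t *\<^sub>R x"
    using s(2) unfolding convex_hull_finite[OF simplex_finite[OF s(1)]] by blast
  define s' where "s' = {v\<in>s. 0 < w v}"
  have "s' \<noteq> {}"
  proof
    assume "s' = {}"
    hence "\<forall>v\<in>s. w v = 0"
      using w(1) unfolding s'_def by force
    with w(2) show False by simp
  qed
  hence "s' \<in> \<Lambda>"
    by (rule face_in_Lambda[OF s(1)]) (auto simp: s'_def)
  moreover have "in_open_cone x s'"
  proof -
    have "(\<Sum>v\<in>s'. w v *\<^sub>R v) = t *\<^sub>R x"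
      using w(1,3) simplex_finite[OF s(1)] unfolding s'_def by (subst sum.mono_neutral_left) force+
    moreover have "(\<Sum>v\<in>s'. (w v / t) *\<^sub>R v) = (1 / t) *\<^sub>R (\<Sum>v\<in>s'. w v *\<^sub>R v)"
      unfolding scaleR_sum_right by (intro sum.cong) auto
    ultimately have "x = (\<Sum>v\<in>s'. (w v / t) *\<^sub>R v)"
      using t(1) by simp
    thus ?thesis
      unfolding in_open_cone_def s'_def using t(1) by (intro exI[of _ "\<lambda>v. w v / t"]) auto
  qed
  ultimately show ?thesis
    by (rule that)
qed

lemma open_cone_simplex_subset:
  assumes s1: "s1 \<in> \<Lambda>" "in_open_cone x s1" and s2: "s2 \<in> \<Lambda>" "in_open_cone x s2"
  shows "s1 \<subseteq> s2"
proof
  fix v0 assume v0: "v0 \<in> s1"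
  have fin1: "finite s1"
    using simplex_finite[OF s1(1)] .
  obtain T1 u where T1: "0 < T1" and u: "\<forall>v\<in>s1. 0 < u v" "sum u s1 = 1"
    and u_sum: "(\<Sum>v\<in>s1. u v *\<^sub>R v) = (1 / T1) *\<^sub>R x"
    using in_open_cone_normalize[OF fin1 simplex_nonempty[OF s1(1)] s1(2)] .
  obtain T2 u2 where T2: "0 < T2" "\<forall>v\<in>s2. 0 < u2 v" "sum u2 s2 = 1"
    "(\<Sum>v\<in>s2. u2 v *\<^sub>R v) = (1 / T2) *\<^sub>R x"
    using in_open_cone_normalize[OF simplex_finite[OF s2(1)] simplex_nonempty[OF s2(1)] s2(2)] .
  have in1: "(1 / T1) *\<^sub>R x \<in> convex hull s1"
    unfolding convex_hull_finite[OF fin1] using u u_sum by (auto intro: less_imp_le)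
  have in2: "(1 / T2) *\<^sub>R x \<in> convex hull s2"
    unfolding convex_hull_finite[OF simplex_finite[OF s2(1)]] using T2 by (auto intro: less_imp_le)
  have "1 / T1 = 1 / T2"
    using hull_simplex_subset_frontier[OF s1(1)] hull_simplex_subset_frontier[OF s2(1)] in1 in2 T1 T2(1)
    by (intro ray_unique) auto
  hence "(1 / T1) *\<^sub>R x \<in> convex hull (s1 \<inter> s2)"
    using in1 in2 hull_inter[OF s1(1) s2(1)] by auto
  then obtain w where w: "\<forall>v\<in>s1 \<inter> s2. 0 \<le> w v" "sum w (s1 \<inter> s2) = 1"
      "(\<Sum>v\<in>s1 \<inter> s2. w v *\<^sub>R v) = (1 / T1) *\<^sub>R x"
    unfolding convex_hull_finite[OF finite_Int[OF disjI1[OF fin1]]] by blast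
  define b where "b v = (if v \<in> s2 then w v else 0)" for v
  have s12: "s1 \<inter> s2 = {v\<in>s1. v \<in> s2}"
    by blast
  have "sum b s1 = 1"
    using w(2) unfolding b_def s12 sum.inter_filter[OF fin1] .
  moreover have "(\<Sum>v\<in>s1. b v *\<^sub>R v) = (1 / T1) *\<^sub>R x"
  proof -
    have "(\<Sum>v\<in>s1. b v *\<^sub>R v) = (\<Sum>v\<in>s1. if v \<in> s2 then w v *\<^sub>R v else 0)"
      by (intro sum.cong) (auto simp: b_def)
    thus ?thesis
      using w(3) unfolding s12 sum.inter_filter[OF fin1] by simp
  qed
  ultimately have "u v0 = b v0"
    using affine_coeffs_unique[OF fin1 simplex_affine_independent[OF s1(1)] _ _ v0, of u b] u(2) u_sum
    by simp
  with u(1) v0 show "v0 \<in> s2"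
    unfolding b_def by (metis less_irrefl)
qed

lemma sperp:
  assumes "d \<noteq> 0"
  shows "sperp \<Lambda> d \<in> \<Lambda>" and "in_open_cone (- d) (sperp \<Lambda> d)"
proof -
  obtain s where s: "s \<in> \<Lambda>" "in_open_cone (- d) s"
    using open_cone_simplex_exists[of "- d"] assms by auto
  have "\<exists>!s. s \<in> \<Lambda> \<and> in_open_cone (- d) s"
    using s open_cone_simplex_subset by (intro ex1I[of _ s]) (auto intro: subset_antisym)
  hence "sperp \<Lambda> d \<in> \<Lambda> \<and> in_open_cone (- d) (sperp \<Lambda> d)"
    unfolding sperp_def in_open_cone_def[symmetric] by (rule theI')
  thus "sperp \<Lambda> d \<in> \<Lambda>" "in_open_cone (- d) (sperp \<Lambda> d)"
    by auto
qed

text \<open>Otherwise the space would be covered by finitely many proper subspaces, the spans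
  of the simplices.\<close>
lemma top_simplex_exists:
  obtains s where "s \<in> top_simplices \<Lambda>"
proof -
  have "\<exists>s\<in>\<Lambda>. card s = CARD('n)"
  proof (rule ccontr)
    assume no_top: "\<not> (\<exists>s\<in>\<Lambda>. card s = CARD('n))"
    have "UNIV \<subseteq> {0} \<union> \<Union>(span ` \<Lambda>)"
    proof
      fix x :: "real^'n"
      show "x \<in> {0} \<union> \<Union>(span ` \<Lambda>)"
      proof (cases "x = 0")
        case False
        then obtain s where "s \<in> \<Lambda>" "in_open_cone x s"
          using open_cone_simplex_exists by blast
        moreover from this(2) have "x \<in> span s"
          unfolding in_open_cone_def by (auto intro!: span_sum span_scale intro: span_base)
        ultimately show ?thesis by blast
      qed simp
    qed
    moreover have "negligible (span s)" if s: "s \<in> \<Lambda>" for s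
    proof (rule negligible_lowdim)
      have "card s \<le> CARD('n)"
        using independent_bound[OF simplex_independent[OF s]] by simp
      thus "dim (span s) < DIM(real^'n)"
        using no_top s dim_eq_card_independent[OF simplex_independent[OF s]] by (simp add: le_neq_implies_less)
    qed
    hence "negligible ({0} \<union> \<Union>(span ` \<Lambda>))"
      using finite_Lambda by (intro negligible_Un negligible_sing negligible_Union) auto
    ultimately have "negligible (UNIV :: (real^'n) set)"
      by (rule negligible_subset[rotated])
    thus False
      using open_not_negligible[of "UNIV :: (real^'n) set"] by simp
  qed
  thus ?thesis
    using that unfolding top_simplices_def by blast
qed

lemma top_simplex_in_Lambda: "s \<in> top_simplices \<Lambda> \<Longrightarrow> s \<in> \<Lambda>"
  and top_simplex_card: "s \<in> top_simplices \<Lambda> \<Longrightarrow> card s = CARD('n)"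
  unfolding top_simplices_def by auto

lemma top_simplex_independent: "s \<in> top_simplices \<Lambda> \<Longrightarrow> independent s"
  and top_simplex_finite: "s \<in> top_simplices \<Lambda> \<Longrightarrow> finite s"
  and top_simplex_subset_verts: "s \<in> top_simplices \<Lambda> \<Longrightarrow> s \<subseteq> V"
  using top_simplex_in_Lambda simplex_independent simplex_finite simplex_subset_verts by blast+

lemma top_simplex_Rats: "s \<in> top_simplices \<Lambda> \<Longrightarrow> v \<in> s \<Longrightarrow> v $ i \<in> \<rat>"
  using top_simplex_subset_verts verts_Rats by blast

lemma top_simplex_span:
  assumes s: "s \<in> top_simplices \<Lambda>"
  shows "span s = UNIV"
proof -
  have "UNIV \<subseteq> span s"
    using card_eq_dim[of s UNIV] top_simplex_independent[OF s] top_simplex_card[OF s] top_simplex_finite[OF s] by simp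
  thus ?thesis by blast
qed

subsection \<open>The vectors \<open>n\<^sup>\<delta>\<^sub>s\<close> and the positive cone\<close>

lemma nvec_char:
  assumes s: "s \<in> top_simplices \<Lambda>" and d: "d \<in> V - s"
  shows "nvec s d d = 1 \<and> (\<forall>v. v \<notin> insert d s \<longrightarrow> nvec s d v = 0) \<and>
    (\<Sum>v\<in>s. of_rat (nvec s d v) *\<^sub>R v) = - d"
proof -
  have fin: "finite s"
    using top_simplex_finite[OF s] .
  define Q where "Q c \<longleftrightarrow> c d = 1 \<and> (\<forall>v. v \<notin> insert d s \<longrightarrow> c v = 0) \<and>
    (\<Sum>v\<in>s. of_rat (c v) *\<^sub>R v) = - d" for c :: "real^'n \<Rightarrow> rat"
  have nvec_The: "nvec s d = (THE c. Q c)"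
    unfolding nvec_def Q_def using fin d by (intro arg_cong[where f = The] ext) (auto simp: add_eq_0_iff)
  have d_Rats: "(- d) $ i \<in> \<rat>" for i
    using verts_Rats d by simp
  obtain c where c: "(\<Sum>v\<in>s. of_rat (c v) *\<^sub>R v) = - d"
    using rational_coordinates[OF top_simplex_independent[OF s] top_simplex_card[OF s] top_simplex_Rats[OF s] d_Rats]
    by auto
  have "(\<Sum>v\<in>s. of_rat (if v = d then 1 else if v \<in> s then c v else 0) *\<^sub>R v) = - d"
    unfolding c[symmetric] using d by (intro sum.cong) auto
  hence "Q (\<lambda>v. if v = d then 1 else if v \<in> s then c v else 0)"
    unfolding Q_def by simp
  moreover have "c1 = c2" if "Q c1" "Q c2" for c1 c2
  proof
    fix v
    show "c1 v = c2 v"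
    proof (cases "v \<in> s")
      case True
      have "(\<Sum>v\<in>s. of_rat (c1 v) *\<^sub>R v) = (\<Sum>v\<in>s. of_rat (c2 v) *\<^sub>R v)"
        using that unfolding Q_def by simp
      from independent_coeffs_unique[OF top_simplex_independent[OF s] fin this True]
      show ?thesis by simp
    next
      case False
      with that show ?thesis
        unfolding Q_def by (cases "v = d") auto
    qed
  qed
  ultimately have "Q (THE c. Q c)"
    by (metis theI)
  thus ?thesis
    unfolding nvec_The Q_def .
qed

lemma nvec_self: "s \<in> top_simplices \<Lambda> \<Longrightarrow> d \<in> V - s \<Longrightarrow> nvec s d d = 1"
  and nvec_outside: "s \<in> top_simplices \<Lambda> \<Longrightarrow> d \<in> V - s \<Longrightarrow> v \<notin> insert d s \<Longrightarrow> nvec s d v = 0"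
  and nvec_simplex_comb: "s \<in> top_simplices \<Lambda> \<Longrightarrow> d \<in> V - s \<Longrightarrow>
    (\<Sum>v\<in>s. of_rat (nvec s d v) *\<^sub>R v) = - d"
  using nvec_char by blast+

lemma nvec_off_simplex:
  "s \<in> top_simplices \<Lambda> \<Longrightarrow> d \<in> V - s \<Longrightarrow> x \<notin> s \<Longrightarrow> nvec s d x = (if x = d then 1 else 0)"
  using nvec_self nvec_outside by auto

lemma nvec_Nsp:
  assumes s: "s \<in> top_simplices \<Lambda>" and d: "d \<in> V - s"
  shows "nvec s d \<in> Nsp V"
proof -
  have sub: "insert d s \<subseteq> V"
    using d top_simplex_subset_verts[OF s] by blast
  have "(\<Sum>v\<in>V. of_rat (nvec s d v) *\<^sub>R v) = (\<Sum>v\<in>insert d s. of_rat (nvec s d v) *\<^sub>R v)"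
    using nvec_outside[OF s d] sub finite_verts by (intro sum.mono_neutral_right) auto
  also have "\<dots> = d + (\<Sum>v\<in>s. of_rat (nvec s d v) *\<^sub>R v)"
    using top_simplex_finite[OF s] d nvec_self[OF s d] by simp
  also have "\<dots> = 0"
    by (simp add: nvec_simplex_comb[OF s d])
  finally show ?thesis
    unfolding Nsp_def Ddag_def using nvec_outside[OF s d] sub by blast
qed

lemma dpair_nvec:
  assumes s: "s \<in> top_simplices \<Lambda>" and d: "d \<in> V - s"
  shows "dpair V r (nvec s d) = r d + (\<Sum>v\<in>s. r v * nvec s d v)"
proof -
  have "dpair V r (nvec s d) = (\<Sum>v\<in>insert d s. r v * nvec s d v)"
    unfolding dpair_def using nvec_outside[OF s d] d top_simplex_subset_verts[OF s] finite_verts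
    by (intro sum.mono_neutral_right) auto
  thus ?thesis
    using top_simplex_finite[OF s] d nvec_self[OF s d] by simp
qed

lemma nvec_nonneg:
  assumes s: "s \<in> top_simplices \<Lambda>" and d: "d \<in> V - s" and sp: "sperp \<Lambda> d \<subseteq> s"
  shows "0 \<le> nvec s d v"
proof (cases "v \<in> s")
  case True
  have fin: "finite s"
    using top_simplex_finite[OF s] .
  obtain c where c: "\<forall>v\<in>sperp \<Lambda> d. 0 < c v" "- d = (\<Sum>v\<in>sperp \<Lambda> d. c v *\<^sub>R v)"
    using sperp(2)[of d] verts_nonzero d unfolding in_open_cone_def by auto
  define k where "k v = (if v \<in> sperp \<Lambda> d then c v else 0)" for v
  have "(\<Sum>v\<in>s. k v *\<^sub>R v) = (\<Sum>v\<in>sperp \<Lambda> d. k v *\<^sub>R v)"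
    by (rule sum.mono_neutral_right[OF fin sp]) (auto simp: k_def)
  also have "\<dots> = - d"
    unfolding c(2) by (intro sum.cong) (auto simp: k_def)
  finally have "(\<Sum>v\<in>s. of_rat (nvec s d v) *\<^sub>R v) = (\<Sum>v\<in>s. k v *\<^sub>R v)"
    using nvec_simplex_comb[OF s d] by simp
  from independent_coeffs_unique[OF top_simplex_independent[OF s] fin this True]
  have "of_rat (nvec s d v) = k v" .
  moreover have "0 \<le> k v"
    using c(1) by (simp add: k_def less_imp_le)
  ultimately show ?thesis
    by (metis zero_le_of_rat_iff)
qed (use nvec_off_simplex[OF s d] in simp)

lemma betastar_eq_on_top_simplex:
  assumes s: "s \<in> top_simplices \<Lambda>" and r: "r \<in> betastar V" "r' \<in> betastar V"
    and eq: "\<forall>d\<in>s. r d = r' d"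
  shows "r = r'"
proof
  fix v
  obtain U where U: "\<And>v. v \<in> V \<Longrightarrow> of_rat (r v) = U \<bullet> v"
    using betastar_inner[OF r(1)] by blast
  obtain U' where U': "\<And>v. v \<in> V \<Longrightarrow> of_rat (r' v) = U' \<bullet> v"
    using betastar_inner[OF r(2)] by blast
  have "orthogonal (U - U') y" if "y \<in> s" for y
    using that eq U U' top_simplex_subset_verts[OF s] unfolding orthogonal_def
    by (force simp: inner_diff_left)
  hence "orthogonal (U - U') (U - U')"
    using top_simplex_span[OF s] by (intro orthogonal_to_span[of "U - U'" s "U - U'"]) auto
  hence "U = U'"
    by (simp add: orthogonal_def)
  show "r v = r' v"
  proof (cases "v \<in> V")
    case True
    thus ?thesis
      using U U' \<open>U = U'\<close> by (metis of_rat_eq_iff)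
  qed (use r in \<open>auto simp: betastar_def Ddag_def\<close>)
qed

lemma rho_prime:
  assumes s: "s \<in> top_simplices \<Lambda>"
  shows "rho_prime \<Lambda> r s \<in> betastar V \<and> (\<forall>d\<in>s. rho_prime \<Lambda> r s d = r d)"
proof -
  obtain u :: "'n \<Rightarrow> rat" where u: "\<And>v. v \<in> s \<Longrightarrow> of_rat (r v) = (\<Sum>i\<in>UNIV. of_rat (u i) * v$i)"
    using rational_linear_functional[OF top_simplex_independent[OF s] top_simplex_card[OF s] top_simplex_Rats[OF s]]
    by auto
  define r' where "r' v = (if v \<in> V then inv of_rat (\<Sum>i\<in>UNIV. of_rat (u i) * v$i) else 0)" for v
  have r'_V: "of_rat (r' v) = (\<Sum>i\<in>UNIV. of_rat (u i) * v$i)" if "v \<in> V" for v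
    using that verts_Rats by (simp add: r'_def of_rat_inv_of_rat Rats_sum Rats_mult)
  have "r' \<in> betastar V"
    unfolding betastar_def Ddag_def using r'_V by (auto simp: r'_def)
  moreover have "\<forall>d\<in>s. r' d = r d"
    using u r'_V top_simplex_subset_verts[OF s] by (metis of_rat_eq_iff subsetD)
  ultimately have "\<exists>!r'. r' \<in> betastar V \<and> (\<forall>d\<in>s. r' d = r d)"
    using betastar_eq_on_top_simplex[OF s] by (intro ex1I[of _ r']) auto
  thus ?thesis
    unfolding rho_prime_def by (rule theI')
qed

lemma dpair_nvec_eq_rho:
  assumes s: "s \<in> top_simplices \<Lambda>" and d: "d \<in> V - s"
  shows "dpair V r (nvec s d) = r d - rho_prime \<Lambda> r s d"
proof -
  let ?r' = "rho_prime \<Lambda> r s"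
  have "dpair V r (nvec s d) = dpair V (\<lambda>v. r v - ?r' v) (nvec s d)"
    using betastar_dpair_Nsp[OF finite_verts _ nvec_Nsp[OF s d]] rho_prime[OF s]
    by (simp add: dpair_diff_left)
  also have "\<dots> = r d - ?r' d"
    using rho_prime[OF s] by (simp add: dpair_nvec[OF s d])
  finally show ?thesis .
qed

definition nonneg_on_gens :: "(real^'n \<Rightarrow> rat) \<Rightarrow> bool" where
  "nonneg_on_gens r \<longleftrightarrow> (\<forall>s\<in>top_simplices \<Lambda>. \<forall>d\<in>V - s. 0 \<le> dpair V r (nvec s d))"

definition pos_on_gens :: "(real^'n \<Rightarrow> rat) \<Rightarrow> bool" where
  "pos_on_gens r \<longleftrightarrow> (\<forall>s\<in>top_simplices \<Lambda>. \<forall>d\<in>V - s. 0 < dpair V r (nvec s d))"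

lemma gen_pairs_iff: "(s, d) \<in> gen_pairs \<Lambda> \<longleftrightarrow> s \<in> top_simplices \<Lambda> \<and> d \<in> V - s"
  unfolding gen_pairs_def by simp

lemma finite_gen_pairs: "finite (gen_pairs \<Lambda>)"
proof (rule finite_subset)
  show "gen_pairs \<Lambda> \<subseteq> \<Lambda> \<times> V"
    unfolding gen_pairs_def top_simplices_def by auto
qed (simp add: finite_Lambda finite_verts)

lemma gen_pairs_Nsp: "\<forall>p\<in>gen_pairs \<Lambda>. nvec (fst p) (snd p) \<in> Nsp V"
  unfolding gen_pairs_def using nvec_Nsp by auto

lemma ncone_nonneg_iff:
  assumes lin: "\<And>a. \<phi> (\<lambda>x. \<Sum>p\<in>gen_pairs \<Lambda>. a p * nvec (fst p) (snd p) x)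
                    = (\<Sum>p\<in>gen_pairs \<Lambda>. a p * \<phi> (nvec (fst p) (snd p)))"
  shows "(\<forall>m\<in>ncone \<Lambda>. 0 \<le> \<phi> m) \<longleftrightarrow> (\<forall>s\<in>top_simplices \<Lambda>. \<forall>d\<in>V - s. 0 \<le> \<phi> (nvec s d))"
proof
  assume nonneg: "\<forall>m\<in>ncone \<Lambda>. 0 \<le> \<phi> m"
  show "\<forall>s\<in>top_simplices \<Lambda>. \<forall>d\<in>V - s. 0 \<le> \<phi> (nvec s d)"
  proof (intro ballI)
    fix s d assume "s \<in> top_simplices \<Lambda>" "d \<in> V - s"
    hence sd: "(s, d) \<in> gen_pairs \<Lambda>"
      by (simp add: gen_pairs_iff)
    define a :: "(real^'n) set \<times> (real^'n) \<Rightarrow> rat" where "a p = (if p = (s, d) then 1 else 0)" for p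
    have "(\<lambda>x. \<Sum>p\<in>gen_pairs \<Lambda>. a p * nvec (fst p) (snd p) x) \<in> ncone \<Lambda>"
      unfolding ncone_def by (intro CollectI exI[of _ a]) (simp add: a_def)
    with nonneg have "0 \<le> (\<Sum>p\<in>gen_pairs \<Lambda>. a p * \<phi> (nvec (fst p) (snd p)))"
      unfolding lin[symmetric] by (rule bspec)
    also have "\<dots> = \<phi> (nvec s d)"
      using sd finite_gen_pairs by (simp add: a_def if_distrib[of "\<lambda>c. c * _"] cong: if_cong)
    finally show "0 \<le> \<phi> (nvec s d)" .
  qed
next
  assume "\<forall>s\<in>top_simplices \<Lambda>. \<forall>d\<in>V - s. 0 \<le> \<phi> (nvec s d)"
  thus "\<forall>m\<in>ncone \<Lambda>. 0 \<le> \<phi> m"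
    unfolding ncone_def using lin by (auto intro!: sum_nonneg simp: gen_pairs_def)
qed

lemma Cplus_eq: "Cplus \<Lambda> = {r\<in>Ddag V. nonneg_on_gens r}"
  unfolding Cplus_def nonneg_on_gens_def by (auto simp: dpair_nvec_eq_rho)

lemma nhat_eq: "nhat \<Lambda> = {r\<in>Ddag V. nonneg_on_gens r}"
proof -
  have "(\<forall>m\<in>ncone \<Lambda>. 0 \<le> dpair V r m) \<longleftrightarrow> nonneg_on_gens r" for r
    unfolding nonneg_on_gens_def by (rule ncone_nonneg_iff) (rule dpair_sum[OF finite_gen_pairs])
  thus ?thesis
    unfolding nhat_def by auto
qed

lemma Cplus_eq_nhat: "Cplus \<Lambda> = nhat \<Lambda>"
  by (simp add: Cplus_eq nhat_eq)

lemma ndag_cone_eq: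
  "ndag_cone \<Lambda> = {f\<in>Ndag V. \<forall>s\<in>top_simplices \<Lambda>. \<forall>d\<in>V - s. 0 \<le> f (nvec s d)}"
proof -
  have "(\<forall>m\<in>ncone \<Lambda>. 0 \<le> f m) \<longleftrightarrow> (\<forall>s\<in>top_simplices \<Lambda>. \<forall>d\<in>V - s. 0 \<le> f (nvec s d))"
    if "f \<in> Ndag V" for f
    by (rule ncone_nonneg_iff) (rule Ndag_sum[OF that finite_gen_pairs gen_pairs_Nsp])
  thus ?thesis
    unfolding ndag_cone_def by auto
qed

lemma dpair_nvec_ge:
  assumes s: "s \<in> top_simplices \<Lambda>" and d: "d \<in> V - s" and sp: "sperp \<Lambda> d \<subseteq> s"
    and r: "\<forall>v\<in>V. 0 \<le> r v"
  shows "r d \<le> dpair V r (nvec s d)"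
proof -
  have "0 \<le> (\<Sum>v\<in>s. r v * nvec s d v)"
    using r nvec_nonneg[OF s d sp] top_simplex_subset_verts[OF s] by (auto intro!: sum_nonneg)
  thus ?thesis
    by (simp add: dpair_nvec[OF s d])
qed

lemma Cplus_Dplus:
  "Cplus \<Lambda> \<inter> Dplus V =
     {r\<in>Dplus V. \<forall>s\<in>top_simplices \<Lambda>. \<forall>d\<in>V - s. \<not> sperp \<Lambda> d \<subseteq> s \<longrightarrow> 0 \<le> dpair V r (nvec s d)}"
proof -
  have "0 \<le> dpair V r (nvec s d)"
    if "r \<in> Dplus V" "s \<in> top_simplices \<Lambda>" "d \<in> V - s" "sperp \<Lambda> d \<subseteq> s" for r s d
    using that dpair_nvec_ge[of s d r] unfolding Dplus_def by force
  thus ?thesis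
    unfolding Cplus_eq nonneg_on_gens_def Dplus_def by blast
qed

subsection \<open>Interiors and images under \<open>\<iota>\<^sup>*\<close>\<close>

lemma dpair_nvec_eq_iota_star:
  "s \<in> top_simplices \<Lambda> \<Longrightarrow> d \<in> V - s \<Longrightarrow> dpair V r (nvec s d) = iota_star V r (nvec s d)"
  by (simp add: iota_star_def nvec_Nsp)

text \<open>The margin scales with the \<open>l\<^sup>1\<close>-norm of the generator, so that it survives
  perturbations of \<open>r\<close> in the sup-norm and of \<open>\<iota>\<^sup>* r\<close> in the dual norm.\<close>
lemma pos_on_gens_margin:
  assumes "pos_on_gens r"
  obtains e where "0 < e"
    and "\<And>s d. s \<in> top_simplices \<Lambda> \<Longrightarrow> d \<in> V - s \<Longrightarrow>
           e * (1 + (\<Sum>v\<in>V. \<bar>nvec s d v\<bar>)) \<le> dpair V r (nvec s d)"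
proof -
  have "\<forall>p\<in>gen_pairs \<Lambda>. 0 < dpair V r (nvec (fst p) (snd p))"
    using assms unfolding pos_on_gens_def gen_pairs_def by auto
  moreover have "\<forall>p\<in>gen_pairs \<Lambda>. 0 < 1 + (\<Sum>v\<in>V. \<bar>nvec (fst p) (snd p) v\<bar>)"
    by (simp add: add_pos_nonneg sum_nonneg)
  ultimately obtain e where "0 < e"
    and "\<forall>p\<in>gen_pairs \<Lambda>. e * (1 + (\<Sum>v\<in>V. \<bar>nvec (fst p) (snd p) v\<bar>)) \<le> dpair V r (nvec (fst p) (snd p))"
    by (rule finite_uniform_margin[OF finite_gen_pairs])
  thus ?thesis
    using that unfolding gen_pairs_def by auto
qed

lemma pos_on_gens_if_Dinterior:
  assumes "r \<in> Dinterior V (Cplus \<Lambda>)"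
  shows "pos_on_gens r"
  unfolding pos_on_gens_def
proof (intro ballI)
  fix s d assume s: "s \<in> top_simplices \<Lambda>" and d: "d \<in> V - s"
  obtain e where e: "0 < e" and r: "r \<in> Cplus \<Lambda>"
    and near: "\<forall>r'\<in>Ddag V. (\<forall>v\<in>V. \<bar>r' v - r v\<bar> < e) \<longrightarrow> r' \<in> Cplus \<Lambda>"
    using assms unfolding Dinterior_def by blast
  define r' where "r' v = r v - (if v = d then e / 2 else 0)" for v
  have "r' \<in> Ddag V"
    using r d unfolding Cplus_def Ddag_def r'_def by auto
  hence "r' \<in> Cplus \<Lambda>"
    using near e unfolding r'_def by auto
  hence "0 \<le> dpair V r' (nvec s d)"
    using s d unfolding Cplus_eq nonneg_on_gens_def by blast
  moreover have "dpair V r' (nvec s d) = dpair V r (nvec s d) - e / 2"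
    unfolding r'_def dpair_diff_left using d
    by (simp add: dpair_point_mass[OF finite_verts] nvec_self[OF s d])
  ultimately show "0 < dpair V r (nvec s d)"
    using e by simp
qed

lemma Dinterior_if_pos_on_gens:
  assumes r: "r \<in> Ddag V" and pos: "pos_on_gens r"
  shows "r \<in> Dinterior V (Cplus \<Lambda>)"
proof -
  obtain e where e: "0 < e" and margin: "\<And>s d. s \<in> top_simplices \<Lambda> \<Longrightarrow> d \<in> V - s \<Longrightarrow>
      e * (1 + (\<Sum>v\<in>V. \<bar>nvec s d v\<bar>)) \<le> dpair V r (nvec s d)"
    using pos_on_gens_margin[OF pos] by blast
  have near: "r' \<in> Cplus \<Lambda>" if r': "r' \<in> Ddag V" "\<forall>v\<in>V. \<bar>r' v - r v\<bar> < e" for r'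
  proof -
    have "0 \<le> dpair V r' (nvec s d)" if s: "s \<in> top_simplices \<Lambda>" and d: "d \<in> V - s" for s d
    proof -
      have "dpair V r (nvec s d) - e * (\<Sum>v\<in>V. \<bar>nvec s d v\<bar>) \<le> dpair V r' (nvec s d)"
        using r'(2) by (intro dpair_lower_bound) (auto intro: less_imp_le)
      thus ?thesis
        using margin[OF s d] e by (simp add: algebra_simps)
    qed
    thus ?thesis
      unfolding Cplus_eq nonneg_on_gens_def using r'(1) by blast
  qed
  moreover have "r \<in> Cplus \<Lambda>"
    using near[OF r] e by simp
  ultimately show ?thesis
    unfolding Dinterior_def by (intro CollectI conjI exI[of _ e] ballI impI) (auto intro: near e)
qed

lemma Dinterior_Cplus: "Dinterior V (Cplus \<Lambda>) = {r\<in>Ddag V. pos_on_gens r}"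
proof (intro set_eqI iffI)
  fix r assume r: "r \<in> Dinterior V (Cplus \<Lambda>)"
  hence "r \<in> Ddag V"
    unfolding Dinterior_def Cplus_def by simp
  with pos_on_gens_if_Dinterior[OF r] show "r \<in> {r\<in>Ddag V. pos_on_gens r}"
    by simp
qed (simp add: Dinterior_if_pos_on_gens)

lemma Dinterior_Cplus_Dplus_int:
  "Dinterior V (Cplus \<Lambda>) \<inter> Dplus_int V =
     {r\<in>Dplus_int V. \<forall>s\<in>top_simplices \<Lambda>. \<forall>d\<in>V - s. \<not> sperp \<Lambda> d \<subseteq> s \<longrightarrow> 0 < dpair V r (nvec s d)}"
proof -
  have "0 < dpair V r (nvec s d)"
    if r: "r \<in> Dplus_int V" and sd: "s \<in> top_simplices \<Lambda>" "d \<in> V - s" "sperp \<Lambda> d \<subseteq> s" for r s d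
  proof -
    have "\<forall>v\<in>V. 0 \<le> r v" "0 < r d"
      using r sd(2) unfolding Dplus_int_def by (auto intro: less_imp_le)
    thus ?thesis
      using dpair_nvec_ge[OF sd] by fastforce
  qed
  thus ?thesis
    unfolding Dinterior_Cplus pos_on_gens_def Dplus_int_def by blast
qed

lemma Nsp_expansion:
  assumes s0: "s0 \<in> top_simplices \<Lambda>" and m: "m \<in> Nsp V"
  shows "m = (\<lambda>x. \<Sum>v\<in>V - s0. m v * nvec s0 v x)"
proof -
  let ?T = "\<lambda>x. \<Sum>v\<in>V - s0. m v * nvec s0 v x"
  have T: "?T \<in> Nsp V"
    using finite_verts nvec_Nsp[OF s0] by (intro Nsp_sum) auto
  have m_off: "m x = 0" if "x \<notin> V" for x
    using m that unfolding Nsp_def Ddag_def by blast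
  have off: "m x = ?T x" if x: "x \<notin> s0" for x
  proof -
    have "?T x = (\<Sum>v\<in>V - s0. if v = x then m x else 0)"
      using nvec_off_simplex[OF s0 _ x] by (intro sum.cong) auto
    also have "\<dots> = m x"
      using finite_verts x m_off by simp
    finally show ?thesis
      by (rule sym)
  qed
  have "\<forall>x. x \<notin> s0 \<longrightarrow> (\<lambda>x. 1 * m x + (- 1) * ?T x) x = 0"
  proof (intro allI impI)
    fix x assume "x \<notin> s0"
    from off[OF this] show "(\<lambda>x. 1 * m x + (- 1) * ?T x) x = 0"
      by simp
  qed
  note vanish = Nsp_vanishing_off_independent[OF finite_verts Nsp_linear_combination[OF m T]
      top_simplex_subset_verts[OF s0] top_simplex_independent[OF s0] this]
  show ?thesis
  proof
    fix x
    from vanish[of x] show "m x = ?T x"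
      by simp
  qed
qed

lemma iota_star_lift:
  assumes f: "f \<in> Ndag V" and s0: "s0 \<in> top_simplices \<Lambda>" and t: "t \<in> Ddag V"
  defines "r \<equiv> \<lambda>v. if v \<in> V - s0 then f (nvec s0 v) - dpair V t (nvec s0 v) + t v else t v"
  shows "r \<in> Ddag V" and "iota_star V r = f"
proof -
  show "r \<in> Ddag V"
    using t unfolding r_def Ddag_def by auto
  have gen: "dpair V r (nvec s0 v) = f (nvec s0 v)" if v: "v \<in> V - s0" for v
  proof -
    have "(\<Sum>w\<in>s0. r w * nvec s0 v w) = (\<Sum>w\<in>s0. t w * nvec s0 v w)"
      by (intro sum.cong) (auto simp: r_def)
    thus ?thesis
      using v by (simp add: dpair_nvec[OF s0 v] r_def)
  qed
  have NV: "\<forall>v\<in>V - s0. nvec s0 v \<in> Nsp V"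
    using nvec_Nsp[OF s0] by blast
  show "iota_star V r = f"
  proof
    fix m
    show "iota_star V r m = f m"
    proof (cases "m \<in> Nsp V")
      case True
      note expand = Nsp_expansion[OF s0 True]
      have "iota_star V r m = dpair V r m"
        using True by (simp add: iota_star_def)
      also have "\<dots> = dpair V r (\<lambda>x. \<Sum>v\<in>V - s0. m v * nvec s0 v x)"
        using expand by (rule arg_cong)
      also have "\<dots> = (\<Sum>v\<in>V - s0. m v * f (nvec s0 v))"
        using finite_verts gen by (simp add: dpair_sum)
      also have "\<dots> = f m"
        using Ndag_sum[OF f _ NV, of m] finite_verts expand by simp
      finally show ?thesis .
    qed (use f in \<open>simp add: iota_star_def Ndag_def\<close>)
  qed
qed

lemma iota_star_Cplus_Dplus: "iota_star V ` (Cplus \<Lambda> \<inter> Dplus V) = ndag_cone \<Lambda>"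
proof
  show "iota_star V ` (Cplus \<Lambda> \<inter> Dplus V) \<subseteq> ndag_cone \<Lambda>"
    unfolding ndag_cone_eq Cplus_eq nonneg_on_gens_def
    by (auto simp: iota_star_Ndag dpair_nvec_eq_iota_star)
next
  show "ndag_cone \<Lambda> \<subseteq> iota_star V ` (Cplus \<Lambda> \<inter> Dplus V)"
  proof
    fix f assume "f \<in> ndag_cone \<Lambda>"
    hence f: "f \<in> Ndag V" and f_nonneg: "\<forall>s\<in>top_simplices \<Lambda>. \<forall>d\<in>V - s. 0 \<le> f (nvec s d)"
      unfolding ndag_cone_eq by auto
    obtain s0 where s0: "s0 \<in> top_simplices \<Lambda>"
      using top_simplex_exists by blast
    have "(\<lambda>_. 0) \<in> Ddag V"
      by (simp add: Ddag_def)
    note lift = iota_star_lift[OF f s0 this]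
    let ?r = "\<lambda>v. if v \<in> V - s0 then f (nvec s0 v) - dpair V (\<lambda>_. 0) (nvec s0 v) + 0 else 0"
    have "?r \<in> Cplus \<Lambda>"
      using lift f_nonneg unfolding Cplus_eq nonneg_on_gens_def by (simp add: dpair_nvec_eq_iota_star)
    moreover have "?r \<in> Dplus V"
      using lift(1) f_nonneg s0 unfolding Dplus_def by (auto simp: dpair_def)
    ultimately have "?r \<in> Cplus \<Lambda> \<inter> Dplus V"
      by (rule IntI)
    thus "f \<in> iota_star V ` (Cplus \<Lambda> \<inter> Dplus V)"
      by (rule image_eqI[where f = "iota_star V", OF lift(2)[symmetric]])
  qed
qed

lemma iota_star_Dinterior_subset:
  "iota_star V ` (Dinterior V (Cplus \<Lambda>) \<inter> Dplus_int V) \<subseteq> Ninterior V (ndag_cone \<Lambda>)"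
proof
  fix f assume "f \<in> iota_star V ` (Dinterior V (Cplus \<Lambda>) \<inter> Dplus_int V)"
  then obtain r where r: "r \<in> Dinterior V (Cplus \<Lambda>)" "r \<in> Dplus_int V" and f: "f = iota_star V r"
    by blast
  have "r \<in> Cplus \<Lambda> \<inter> Dplus V"
    using r unfolding Dinterior_def Dplus_int_def Dplus_def by (auto intro: less_imp_le)
  hence f_cone: "f \<in> ndag_cone \<Lambda>"
    using iota_star_Cplus_Dplus f by blast
  obtain e where e: "0 < e" and margin: "\<And>s d. s \<in> top_simplices \<Lambda> \<Longrightarrow> d \<in> V - s \<Longrightarrow>
      e * (1 + (\<Sum>v\<in>V. \<bar>nvec s d v\<bar>)) \<le> dpair V r (nvec s d)"
    using pos_on_gens_margin r(1) Dinterior_Cplus by blast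
  have "g \<in> ndag_cone \<Lambda>"
    if g: "g \<in> Ndag V" "\<forall>m\<in>Nsp V. \<bar>g m - f m\<bar> \<le> e * (\<Sum>v\<in>V. \<bar>m v\<bar>)" for g
  proof -
    have "0 \<le> g (nvec s d)" if s: "s \<in> top_simplices \<Lambda>" and d: "d \<in> V - s" for s d
    proof -
      have "\<bar>g (nvec s d) - f (nvec s d)\<bar> \<le> e * (\<Sum>v\<in>V. \<bar>nvec s d v\<bar>)"
        using g(2) nvec_Nsp[OF s d] by blast
      moreover have "f (nvec s d) = dpair V r (nvec s d)"
        using dpair_nvec_eq_iota_star[OF s d] f by simp
      ultimately show ?thesis
        using margin[OF s d] e by (simp add: algebra_simps abs_le_iff)
    qed
    thus ?thesis
      unfolding ndag_cone_eq using g(1) by blast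
  qed
  thus "f \<in> Ninterior V (ndag_cone \<Lambda>)"
    unfolding Ninterior_def using f_cone e by blast
qed

lemma Ninterior_nvec_lower_bound:
  assumes "f \<in> Ninterior V (ndag_cone \<Lambda>)"
  obtains e where "0 < e" and "\<And>s d. s \<in> top_simplices \<Lambda> \<Longrightarrow> d \<in> V - s \<Longrightarrow> e \<le> f (nvec s d)"
proof -
  obtain e where f_cone: "f \<in> ndag_cone \<Lambda>" and e: "0 < e"
    and near: "\<forall>g\<in>Ndag V. (\<forall>m\<in>Nsp V. \<bar>g m - f m\<bar> \<le> e * (\<Sum>v\<in>V. \<bar>m v\<bar>)) \<longrightarrow> g \<in> ndag_cone \<Lambda>"
    using assms unfolding Ninterior_def by blast
  have f: "f \<in> Ndag V"
    using f_cone unfolding ndag_cone_eq by blast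
  have "e \<le> f (nvec s d)" if s: "s \<in> top_simplices \<Lambda>" and d: "d \<in> V - s" for s d
  proof -
    define g where "g m = (if m \<in> Nsp V then f m - e * m d else 0)" for m
    have "g \<in> Ndag V"
      unfolding Ndag_def
    proof (intro CollectI conjI allI impI)
      fix a b m m' assume mm: "m \<in> Nsp V" "m' \<in> Nsp V"
      thus "g (\<lambda>x. a * m x + b * m' x) = a * g m + b * g m'"
        using Ndag_linear[OF f mm] Nsp_linear_combination[OF mm] by (simp add: g_def algebra_simps)
    qed (simp add: g_def)
    moreover have "\<bar>g m - f m\<bar> \<le> e * (\<Sum>v\<in>V. \<bar>m v\<bar>)" if "m \<in> Nsp V" for m
    proof -
      have "\<bar>m d\<bar> \<le> (\<Sum>v\<in>V. \<bar>m v\<bar>)"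
        using d finite_verts by (intro member_le_sum) auto
      thus ?thesis
        using that e by (simp add: g_def abs_mult mult_left_mono)
    qed
    ultimately have "0 \<le> g (nvec s d)"
      using near s d unfolding ndag_cone_eq by blast
    thus ?thesis
      using nvec_Nsp[OF s d] nvec_self[OF s d] by (simp add: g_def)
  qed
  with e show ?thesis
    using that by blast
qed

lemma Ninterior_subset_iota_star:
  "Ninterior V (ndag_cone \<Lambda>) \<subseteq> iota_star V ` (Dinterior V (Cplus \<Lambda>) \<inter> Dplus_int V)"
proof
  fix f assume f_int: "f \<in> Ninterior V (ndag_cone \<Lambda>)"
  hence f: "f \<in> Ndag V"
    unfolding Ninterior_def ndag_cone_eq by blast
  obtain e where e: "0 < e" and f_ge: "\<And>s d. s \<in> top_simplices \<Lambda> \<Longrightarrow> d \<in> V - s \<Longrightarrow> e \<le> f (nvec s d)"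
    using Ninterior_nvec_lower_bound[OF f_int] by blast
  have f_pos: "0 < f (nvec s d)" if "s \<in> top_simplices \<Lambda>" "d \<in> V - s" for s d
    using e f_ge[OF that] by (rule less_le_trans)
  obtain s0 where s0: "s0 \<in> top_simplices \<Lambda>"
    using top_simplex_exists by blast
  have pos: "\<forall>v\<in>V - s0. 0 < f (nvec s0 v)"
    by (simp add: f_pos[OF s0])
  have weight: "\<forall>v\<in>V - s0. 0 < 1 + (\<Sum>w\<in>V. \<bar>nvec s0 v w\<bar>)"
    by (simp add: add_pos_nonneg sum_nonneg)
  obtain \<epsilon> where \<epsilon>: "0 < \<epsilon>"
    and margin: "\<forall>v\<in>V - s0. \<epsilon> * (1 + (\<Sum>w\<in>V. \<bar>nvec s0 v w\<bar>)) \<le> f (nvec s0 v)"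
    using finite_verts by (rule finite_uniform_margin[OF finite_Diff pos weight])
  define t where "t v = (if v \<in> V then \<epsilon> else 0)" for v
  have "t \<in> Ddag V"
    by (simp add: Ddag_def t_def)
  note lift = iota_star_lift[OF f s0 this]
  let ?r = "\<lambda>v. if v \<in> V - s0 then f (nvec s0 v) - dpair V t (nvec s0 v) + t v else t v"
  have "0 < ?r v" if v: "v \<in> V" for v
  proof (cases "v \<in> s0")
    case False
    have "dpair V t (nvec s0 v) - \<epsilon> * (\<Sum>w\<in>V. \<bar>nvec s0 v w\<bar>) \<le> dpair V (\<lambda>_. 0) (nvec s0 v)"
      using \<epsilon> by (intro dpair_lower_bound) (simp add: t_def)
    hence "dpair V t (nvec s0 v) \<le> \<epsilon> * (\<Sum>w\<in>V. \<bar>nvec s0 v w\<bar>)"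
      by (simp add: dpair_def)
    moreover have "\<epsilon> * (1 + (\<Sum>w\<in>V. \<bar>nvec s0 v w\<bar>)) \<le> f (nvec s0 v)"
      using margin v False by blast
    ultimately show ?thesis
      using v False \<epsilon> by (simp add: t_def algebra_simps)
  qed (use v \<epsilon> in \<open>simp add: t_def\<close>)
  hence "?r \<in> Dplus_int V"
    using lift(1) unfolding Dplus_int_def by blast
  moreover have "?r \<in> Dinterior V (Cplus \<Lambda>)"
    unfolding Dinterior_Cplus pos_on_gens_def
    using lift f_pos by (simp add: dpair_nvec_eq_iota_star)
  ultimately have "?r \<in> Dinterior V (Cplus \<Lambda>) \<inter> Dplus_int V"
    by (intro IntI)
  thus "f \<in> iota_star V ` (Dinterior V (Cplus \<Lambda>) \<inter> Dplus_int V)"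
    by (rule image_eqI[where f = "iota_star V", OF lift(2)[symmetric]])
qed

lemma iota_star_Dinterior:
  "iota_star V ` (Dinterior V (Cplus \<Lambda>) \<inter> Dplus_int V) = Ninterior V (ndag_cone \<Lambda>)"
  using iota_star_Dinterior_subset Ninterior_subset_iota_star by (rule subset_antisym)

end

theorem proposition2p1:
  fixes \<Delta> :: "(real ^ 'n::finite) set"
    and \<Lambda> :: "(real ^ 'n) set set"
  assumes refl: "reflexive_polytope \<Delta>"
    and decomp: "simplicial_decomp \<Lambda> (frontier \<Delta>)"
    and vert: "verts \<Lambda> = admissible_pts \<Delta>"
    and gen: "lattice_generated_by (verts \<Lambda>)"
  shows "Cplus \<Lambda> = nhat \<Lambda> \<and>
         Cplus \<Lambda> \<inter> Dplus (verts \<Lambda>) =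
           {r\<in>Dplus (verts \<Lambda>). \<forall>s\<in>top_simplices \<Lambda>. \<forall>d\<in>verts \<Lambda> - s.
              \<not> sperp \<Lambda> d \<subseteq> s \<longrightarrow> dpair (verts \<Lambda>) r (nvec s d) \<ge> 0} \<and>
         Dinterior (verts \<Lambda>) (Cplus \<Lambda>) \<inter> Dplus_int (verts \<Lambda>) =
           {r\<in>Dplus_int (verts \<Lambda>). \<forall>s\<in>top_simplices \<Lambda>. \<forall>d\<in>verts \<Lambda> - s.
              \<not> sperp \<Lambda> d \<subseteq> s \<longrightarrow> dpair (verts \<Lambda>) r (nvec s d) > 0} \<and>
         iota_star (verts \<Lambda>) ` (Cplus \<Lambda> \<inter> Dplus (verts \<Lambda>)) = ndag_cone \<Lambda> \<and>
         iota_star (verts \<Lambda>) ` (Dinterior (verts \<Lambda>) (Cplus \<Lambda>) \<inter> Dplus_int (verts \<Lambda>)) =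
           Ninterior (verts \<Lambda>) (ndag_cone \<Lambda>)"
proof -
  obtain S where "finite S" "\<Delta> = convex hull S"
    using refl unfolding reflexive_polytope_def lattice_polytope_def by blast
  hence "convex \<Delta>" "bounded \<Delta>"
    by (simp_all add: finite_imp_bounded_convex_hull)
  moreover have "0 \<in> interior \<Delta>"
    using refl unfolding reflexive_polytope_def by blast
  moreover have "v $ i \<in> \<rat>" if "v \<in> verts \<Lambda>" for v i
    using that Ints_subset_Rats unfolding vert admissible_pts_def lattice_pts_def by blast
  ultimately interpret boundary_triangulation \<Delta> \<Lambda>
    using decomp by unfold_locales
  show ?thesis
    by (intro conjI Cplus_eq_nhat Cplus_Dplus Dinterior_Cplus_Dplus_int iota_star_Cplus_Dplus
        iota_star_Dinterior)
qed

end
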